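(* Let $G$ be a finite graph and $k=\chi(G)$. If every $k$-coloring of $G^2=G\times G$ is trivial (in particular, if $G$ is trivially power-colorable), then $G$ is tight.
   Context: Graphs are simple and undirected; a $k$-coloring is a proper coloring with colors in $\{0,\dots,k-1\}$. The product $G\times G$ has vertex set $V(G)\times V(G)$, with $(u,v)$ adjacent to $(u',v')$ iff $uu'\in E(G)$ and $vv'\in E(G)$; $G^n$ is the analogous product of $n$ copies. A coloring $\Phi$ of a product $\times_{i\in I}G_i$ is trivial if there exist $i^*\in I$ and a proper coloring $\phi$ of $G_{i^*}$ with $\Phi(v)=\phi(v_{i^*})$ for all $v$. A graph $H$ is trivially power-colorable if for every positive integer $n$, every $\chi(H)$-coloring of $H^n$ is trivial. A $k$-coloring $\phi$ of $G$ is tight if for every vertex $v$ and every color $c\ne\phi(v)$ there is a neighbor $u$ of $v$ with $\phi(u)=c$. $G$ is tight if all of its $\chi(G)$-colorings are tight. *)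

theory Defs
  imports Main
begin

definition fin_graph :: "'a set \<Rightarrow> ('a \<Rightarrow> 'a \<Rightarrow> bool) \<Rightarrow> bool" where
  "fin_graph V E \<longleftrightarrow> finite V \<and> (\<forall>u v. E u v \<longrightarrow> u \<in> V \<and> v \<in> V)
     \<and> (\<forall>u v. E u v \<longrightarrow> E v u) \<and> (\<forall>v. \<not> E v v)"

definition proper_coloring :: "'a set \<Rightarrow> ('a \<Rightarrow> 'a \<Rightarrow> bool) \<Rightarrow> ('a \<Rightarrow> nat) \<Rightarrow> bool" where
  "proper_coloring V E f \<longleftrightarrow> (\<forall>u\<in>V. \<forall>v\<in>V. E u v \<longrightarrow> f u \<noteq> f v)"

definition k_coloring :: "'a set \<Rightarrow> ('a \<Rightarrow> 'a \<Rightarrow> bool) \<Rightarrow> nat \<Rightarrow> ('a \<Rightarrow> nat) \<Rightarrow> bool" where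
  "k_coloring V E k f \<longleftrightarrow> (\<forall>v\<in>V. f v < k) \<and> proper_coloring V E f"

definition chromatic_number :: "'a set \<Rightarrow> ('a \<Rightarrow> 'a \<Rightarrow> bool) \<Rightarrow> nat" where
  "chromatic_number V E = (LEAST k. \<exists>f. k_coloring V E k f)"

definition prod_verts :: "'a set \<Rightarrow> 'b set \<Rightarrow> ('a \<times> 'b) set" where
  "prod_verts V W = V \<times> W"

definition prod_edges :: "('a \<Rightarrow> 'a \<Rightarrow> bool) \<Rightarrow> ('b \<Rightarrow> 'b \<Rightarrow> bool) \<Rightarrow> ('a \<times> 'b) \<Rightarrow> ('a \<times> 'b) \<Rightarrow> bool" where
  "prod_edges E F p q \<longleftrightarrow> E (fst p) (fst q) \<and> F (snd p) (snd q)"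

definition trivial_prod_coloring ::
  "'a set \<Rightarrow> ('a \<Rightarrow> 'a \<Rightarrow> bool) \<Rightarrow> 'b set \<Rightarrow> ('b \<Rightarrow> 'b \<Rightarrow> bool) \<Rightarrow> ('a \<times> 'b \<Rightarrow> nat) \<Rightarrow> bool" where
  "trivial_prod_coloring V E W F \<Phi> \<longleftrightarrow>
     (\<exists>\<phi>. proper_coloring V E \<phi> \<and> (\<forall>p\<in>V \<times> W. \<Phi> p = \<phi> (fst p))) \<or>
     (\<exists>\<phi>. proper_coloring W F \<phi> \<and> (\<forall>p\<in>V \<times> W. \<Phi> p = \<phi> (snd p)))"

definition tight_coloring :: "'a set \<Rightarrow> ('a \<Rightarrow> 'a \<Rightarrow> bool) \<Rightarrow> nat \<Rightarrow> ('a \<Rightarrow> nat) \<Rightarrow> bool" where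
  "tight_coloring V E k f \<longleftrightarrow>
     (\<forall>v\<in>V. \<forall>c<k. c \<noteq> f v \<longrightarrow> (\<exists>u\<in>V. E v u \<and> f u = c))"

definition tight_graph :: "'a set \<Rightarrow> ('a \<Rightarrow> 'a \<Rightarrow> bool) \<Rightarrow> bool" where
  "tight_graph V E \<longleftrightarrow>
     (\<forall>f. k_coloring V E (chromatic_number V E) f \<longrightarrow> tight_coloring V E (chromatic_number V E) f)"

end

theory Submission
  imports Defs
begin

text \<open>If a \<open>\<chi>(G)\<close>-coloring \<open>f\<close> of \<open>G\<close> misses the color \<open>c\<close> in the neighbourhood of \<open>v\<close>,
  take the coloring \<open>(x, y) \<mapsto> f x\<close> of \<open>G \<times> G\<close> and recolor the single vertex \<open>(v, v)\<close> with \<open>c\<close>.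
  Every neighbour \<open>(x, y)\<close> of \<open>(v, v)\<close> has \<open>x\<close> adjacent to \<open>v\<close>, so the result is still proper.
  It is not trivial: it separates \<open>(v, v)\<close> from \<open>(v, w)\<close>, so it does not factor through the
  first coordinate, and it separates \<open>(v, w)\<close> from \<open>(w, w)\<close> or \<open>(v, v)\<close> from \<open>(w, v)\<close>, so it does
  not factor through the second. Such a \<open>w \<noteq> v\<close> exists because \<open>\<chi>(G) \<ge> 2\<close>.\<close>

lemma chromatic_number_le:
  assumes "k_coloring V E k f"
  shows "chromatic_number V E \<le> k"
  unfolding chromatic_number_def using assms by (metis (mono_tags) Least_le)

lemma chromatic_number_le_1_if_subset_singleton:
  assumes "\<And>x. \<not> E x x" and "V \<subseteq> {v}"
  shows "chromatic_number V E \<le> 1"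
proof -
  have "k_coloring V E 1 (\<lambda>_. 0)"
    using assms unfolding k_coloring_def proper_coloring_def by auto
  then show ?thesis by (rule chromatic_number_le)
qed

lemma k_coloring_prod_diagonal_recolor:
  assumes sym: "\<And>x y. E x y \<Longrightarrow> E y x" and irrefl: "\<And>x. \<not> E x x"
    and f: "k_coloring V E k f" and "c < k"
    and missing: "\<And>u. u \<in> V \<Longrightarrow> E v u \<Longrightarrow> f u \<noteq> c"
  shows "k_coloring (prod_verts V V) (prod_edges E E) k ((\<lambda>p. f (fst p))((v, v) := c))"
    (is "k_coloring _ _ k ?\<Phi>")
  unfolding k_coloring_def proper_coloring_def
proof (intro conjI ballI impI)
  fix p assume "p \<in> prod_verts V V"
  then show "?\<Phi> p < k"
    using \<open>c < k\<close> f unfolding prod_verts_def k_coloring_def by auto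
next
  fix p q assume "p \<in> prod_verts V V" "q \<in> prod_verts V V" "prod_edges E E p q"
  then obtain a b x y where pq: "p = (a, b)" "q = (x, y)" and "E a x"
    and V: "a \<in> V" "x \<in> V"
    unfolding prod_verts_def prod_edges_def by auto
  have "f a \<noteq> f x"
    using f \<open>E a x\<close> V unfolding k_coloring_def proper_coloring_def by blast
  moreover have "f x \<noteq> c" if "a = v" using missing \<open>E a x\<close> V that by blast
  moreover have "f a \<noteq> c" if "x = v" using missing sym \<open>E a x\<close> V that by blast
  moreover have "a \<noteq> x" using irrefl \<open>E a x\<close> by blast
  ultimately show "?\<Phi> p \<noteq> ?\<Phi> q" using pq by auto
qed

lemma not_trivial_prod_diagonal_recolor:
  assumes "v \<in> V" "w \<in> V" "w \<noteq> v" "c \<noteq> f v"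
  shows "\<not> trivial_prod_coloring V E V E ((\<lambda>p. f (fst p))((v, v) := c))"
  unfolding trivial_prod_coloring_def
proof (intro notI, elim disjE exE conjE)
  fix \<phi> assume h: "\<forall>p\<in>V \<times> V. ((\<lambda>p. f (fst p))((v, v) := c)) p = \<phi> (fst p)"
  have "\<phi> v = c" using h[rule_format, of "(v, v)"] assms(1) by simp
  moreover have "\<phi> v = f v" using h[rule_format, of "(v, w)"] assms(1-3) by simp
  ultimately show False using assms(4) by simp
next
  fix \<phi> assume h: "\<forall>p\<in>V \<times> V. ((\<lambda>p. f (fst p))((v, v) := c)) p = \<phi> (snd p)"
  have "\<phi> v = c" using h[rule_format, of "(v, v)"] assms(1) by simp
  moreover have "\<phi> v = f w" using h[rule_format, of "(w, v)"] assms(1-3) by simp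
  moreover have "\<phi> w = f v" using h[rule_format, of "(v, w)"] assms(1-3) by simp
  moreover have "\<phi> w = f w" using h[rule_format, of "(w, w)"] assms(2,3) by simp
  ultimately show False using assms(4) by simp
qed

theorem mainTheorem5:
  fixes V :: "'a set" and E :: "'a \<Rightarrow> 'a \<Rightarrow> bool"
  assumes "fin_graph V E"
    and "\<forall>\<Phi>. k_coloring (prod_verts V V) (prod_edges E E) (chromatic_number V E) \<Phi>
               \<longrightarrow> trivial_prod_coloring V E V E \<Phi>"
  shows "tight_graph V E"
  unfolding tight_graph_def tight_coloring_def
proof (intro allI impI ballI)
  fix f v c
  let ?k = "chromatic_number V E"
  assume f: "k_coloring V E ?k f" and "v \<in> V" "c < ?k" "c \<noteq> f v"
  have sym: "\<And>x y. E x y \<Longrightarrow> E y x" and irrefl: "\<And>x. \<not> E x x"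
    using assms(1) unfolding fin_graph_def by blast+
  show "\<exists>u\<in>V. E v u \<and> f u = c"
  proof (rule ccontr)
    assume "\<not> ?thesis"
    then have "\<And>u. u \<in> V \<Longrightarrow> E v u \<Longrightarrow> f u \<noteq> c" by blast
    then have "k_coloring (prod_verts V V) (prod_edges E E) ?k ((\<lambda>p. f (fst p))((v, v) := c))"
      using k_coloring_prod_diagonal_recolor[OF _ _ f \<open>c < ?k\<close>] sym irrefl by metis
    then have trivial: "trivial_prod_coloring V E V E ((\<lambda>p. f (fst p))((v, v) := c))"
      using assms(2) by blast
    have "f v < ?k" using f \<open>v \<in> V\<close> unfolding k_coloring_def by blast
    with \<open>c < ?k\<close> \<open>c \<noteq> f v\<close> have "\<not> ?k \<le> 1" by linarith
    then have "\<not> V \<subseteq> {v}"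
      using chromatic_number_le_1_if_subset_singleton[of E, OF irrefl] by blast
    then obtain w where "w \<in> V" "w \<noteq> v" by blast
    with \<open>v \<in> V\<close> \<open>c \<noteq> f v\<close> show False
      using not_trivial_prod_diagonal_recolor trivial by metis
  qed
qed

end
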